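(* Let $\mathcal{G}=(\mathcal{A},\phi)$ be a $\mathrm{PLTL}_{\mathbf{G}}$ game with $\mathrm{var}(\phi)\neq\emptyset$. For $y\in\mathrm{var}(\phi)$ let $\phi_y$ be the formula obtained from $\phi$ by inductively replacing every subformula $\mathbf{G}_{\le z}\psi$ with $z\neq y$ by $\psi$, and let $\mathcal{G}_y=(\mathcal{A},\phi_y)$. Then $\mathcal{W}^0_{\mathcal{G}}$ is infinite if and only if there exists $y\in\mathrm{var}(\phi)$ such that $\mathcal{W}^0_{\mathcal{G}_y}$ contains every valuation $\{y\}\to\mathbb{N}$ (or $\mathrm{var}(\phi_y)=\emptyset$ and Player 0 wins $\mathcal{G}_y$). Moreover, if $\phi$ is a PLTL formula containing at least one operator $\mathbf{F}_{\le x}$, then $\mathcal{W}^0_{(\mathcal{A},\phi)}$ is infinite if and only if it is non-empty.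
   Context: PLTL formulae over atomic propositions $P$ and disjoint variable sets $\mathcal{X},\mathcal{Y}$: $\phi::= p\mid\neg p\mid\phi\wedge\phi\mid\phi\vee\phi\mid\mathbf{X}\phi\mid\phi\mathbf{U}\phi\mid\phi\mathbf{R}\phi\mid\mathbf{F}_{\le x}\phi\mid\mathbf{G}_{\le y}\phi$ ($x\in\mathcal{X}$, $y\in\mathcal{Y}$), with LTL semantics for unparameterized operators and, w.r.t. $\alpha\colon\mathcal{X}\cup\mathcal{Y}\to\mathbb{N}$: $\mathbf{F}_{\le x}\phi$ holds at $i$ iff $\phi$ holds at some $i+j$, $0\le j\le\alpha(x)$; $\mathbf{G}_{\le y}\phi$ holds at $i$ iff $\phi$ holds at all $i+j$, $0\le j\le\alpha(y)$. $\phi$ is $\mathrm{PLTL}_{\mathbf{G}}$ if $\mathrm{var}(\phi)\subseteq\mathcal{Y}$. In the game $(\mathcal{A},\phi)$ on a finite arena $\mathcal{A}=(V,V_0,V_1,E,v_0,\ell)$, Player 0 wins a play $\rho$ w.r.t. $\alpha$ iff $(\ell(\rho_0)\ell(\rho_1)\cdots,0,\alpha)\models\phi$. $\mathcal{W}^0_{\mathcal{G}}$ is the set of valuations $\alpha\colon\mathrm{var}(\phi)\to\mathbb{N}$ for which Player 0 has a strategy winning every consistent play w.r.t. $\alpha$. *)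

theory Defs
  imports Main
begin

text \<open>Atomic propositions of type 'p, parameter variables: 'x for F-variables (set X),
 'y for G-variables (set Y); distinct types make X and Y disjoint.\<close>

datatype ('p, 'x, 'y) pltl =
    Prop 'p
  | NProp 'p
  | And "('p,'x,'y) pltl" "('p,'x,'y) pltl"
  | Or "('p,'x,'y) pltl" "('p,'x,'y) pltl"
  | Next "('p,'x,'y) pltl"
  | Until "('p,'x,'y) pltl" "('p,'x,'y) pltl"
  | Release "('p,'x,'y) pltl" "('p,'x,'y) pltl"
  | Fle 'x "('p,'x,'y) pltl"
  | Gle 'y "('p,'x,'y) pltl"

fun var :: "('p,'x,'y) pltl \<Rightarrow> ('x + 'y) set" where
  "var (Prop p) = {}"
| "var (NProp p) = {}"
| "var (And a b) = var a \<union> var b"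
| "var (Or a b) = var a \<union> var b"
| "var (Next a) = var a"
| "var (Until a b) = var a \<union> var b"
| "var (Release a b) = var a \<union> var b"
| "var (Fle x a) = insert (Inl x) (var a)"
| "var (Gle y a) = insert (Inr y) (var a)"

definition is_PLTL_G :: "('p,'x,'y) pltl \<Rightarrow> bool" where
  "is_PLTL_G \<phi> \<longleftrightarrow> var \<phi> \<subseteq> range Inr"

fun restrictG :: "'y \<Rightarrow> ('p,'x,'y) pltl \<Rightarrow> ('p,'x,'y) pltl" where
  "restrictG y (Prop p) = Prop p"
| "restrictG y (NProp p) = NProp p"
| "restrictG y (And a b) = And (restrictG y a) (restrictG y b)"
| "restrictG y (Or a b) = Or (restrictG y a) (restrictG y b)"
| "restrictG y (Next a) = Next (restrictG y a)"
| "restrictG y (Until a b) = Until (restrictG y a) (restrictG y b)"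
| "restrictG y (Release a b) = Release (restrictG y a) (restrictG y b)"
| "restrictG y (Fle x a) = Fle x (restrictG y a)"
| "restrictG y (Gle z a) = (if z = y then Gle z (restrictG y a) else restrictG y a)"

fun sat :: "(nat \<Rightarrow> 'p set) \<Rightarrow> nat \<Rightarrow> ('x + 'y \<Rightarrow> nat) \<Rightarrow> ('p,'x,'y) pltl \<Rightarrow> bool" where
  "sat w i \<alpha> (Prop p) = (p \<in> w i)"
| "sat w i \<alpha> (NProp p) = (p \<notin> w i)"
| "sat w i \<alpha> (And a b) = (sat w i \<alpha> a \<and> sat w i \<alpha> b)"
| "sat w i \<alpha> (Or a b) = (sat w i \<alpha> a \<or> sat w i \<alpha> b)"
| "sat w i \<alpha> (Next a) = sat w (Suc i) \<alpha> a"
| "sat w i \<alpha> (Until a b) = (\<exists>k\<ge>i. sat w k \<alpha> b \<and> (\<forall>j. i \<le> j \<and> j < k \<longrightarrow> sat w j \<alpha> a))"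
| "sat w i \<alpha> (Release a b) = (\<forall>k\<ge>i. sat w k \<alpha> b \<or> (\<exists>j. i \<le> j \<and> j < k \<and> sat w j \<alpha> a))"
| "sat w i \<alpha> (Fle x a) = (\<exists>j\<le>\<alpha> (Inl x). sat w (i + j) \<alpha> a)"
| "sat w i \<alpha> (Gle y a) = (\<forall>j\<le>\<alpha> (Inr y). sat w (i + j) \<alpha> a)"

record ('v, 'p) arena =
  arV :: "'v set"
  arV0 :: "'v set"
  arV1 :: "'v set"
  arE :: "('v \<times> 'v) set"
  arInit :: "'v"
  arLab :: "'v \<Rightarrow> 'p set"

definition is_arena :: "('v,'p) arena \<Rightarrow> bool" where
  "is_arena A \<longleftrightarrow> finite (arV A) \<and> arV0 A \<union> arV1 A = arV A \<and> arV0 A \<inter> arV1 A = {}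
     \<and> arE A \<subseteq> arV A \<times> arV A \<and> (\<forall>v\<in>arV A. \<exists>v'. (v, v') \<in> arE A) \<and> arInit A \<in> arV A"

definition is_play :: "('v,'p) arena \<Rightarrow> (nat \<Rightarrow> 'v) \<Rightarrow> bool" where
  "is_play A \<rho> \<longleftrightarrow> \<rho> 0 = arInit A \<and> (\<forall>n. (\<rho> n, \<rho> (Suc n)) \<in> arE A)"

definition is_strategy0 :: "('v,'p) arena \<Rightarrow> ('v list \<Rightarrow> 'v) \<Rightarrow> bool" where
  "is_strategy0 A \<sigma> \<longleftrightarrow> (\<forall>h. h \<noteq> [] \<and> set h \<subseteq> arV A \<and> last h \<in> arV0 A \<longrightarrow> (last h, \<sigma> h) \<in> arE A)"

definition consistent :: "('v,'p) arena \<Rightarrow> ('v list \<Rightarrow> 'v) \<Rightarrow> (nat \<Rightarrow> 'v) \<Rightarrow> bool" where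
  "consistent A \<sigma> \<rho> \<longleftrightarrow> (\<forall>n. \<rho> n \<in> arV0 A \<longrightarrow> \<rho> (Suc n) = \<sigma> (map \<rho> [0..<Suc n]))"

definition wins0 :: "('v,'p) arena \<Rightarrow> ('p,'x,'y) pltl \<Rightarrow> ('x + 'y \<Rightarrow> nat) \<Rightarrow> (nat \<Rightarrow> 'v) \<Rightarrow> bool" where
  "wins0 A \<phi> \<alpha> \<rho> \<longleftrightarrow> sat (\<lambda>n. arLab A (\<rho> n)) 0 \<alpha> \<phi>"

text \<open>Valuations var(phi) -> N, represented extensionally (value 0 outside var(phi)).\<close>
definition valuations :: "('x + 'y) set \<Rightarrow> ('x + 'y \<Rightarrow> nat) set" where
  "valuations S = {\<alpha>. \<forall>v. v \<notin> S \<longrightarrow> \<alpha> v = 0}"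

definition W0 :: "('v,'p) arena \<Rightarrow> ('p,'x,'y) pltl \<Rightarrow> ('x + 'y \<Rightarrow> nat) set" where
  "W0 A \<phi> = {\<alpha> \<in> valuations (var \<phi>). \<exists>\<sigma>. is_strategy0 A \<sigma> \<and>
       (\<forall>\<rho>. is_play A \<rho> \<and> consistent A \<sigma> \<rho> \<longrightarrow> wins0 A \<phi> \<alpha> \<rho>)}"

end

theory Submission
  imports Defs
begin

(* Satisfaction of a PLTL formula is monotone in the parameters:
   it survives enlarging the bounds of F-operators and shrinking the bounds of
   G-operators (sat_mono).  A winning strategy for one (formula, valuation) pair
   is winning for another whenever every play winning for the first is winning
   for the second (W0_transfer), so W0 inherits this monotonicity (W0_mono).
   - If phi has an F-variable x, increasing alpha(x) keeps a winning valuation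
     winning, giving infinitely many winning valuations (W0_infinite_if_Fle).
   - For a PLTL_G formula, valuations of phi that vanish outside {y} satisfy
     phi exactly when they satisfy phi_y (sat_restrictG).  If W0 is infinite,
     some coordinate y is unbounded on W0 (unbounded_coordinate); shrinking
     all other G-bounds to 0 then shows that every valuation of y wins phi_y.
     Conversely, if every valuation of y wins phi_y, the valuations
     y |-> n (n in N) all win phi.  The alternative "var(phi_y) = {}" cannot
     occur, since phi_y still contains y (var_restrictG). *)

lemma sat_mono:
  assumes "\<And>x. \<alpha> (Inl x) \<le> \<beta> (Inl x)" "\<And>y. \<beta> (Inr y) \<le> \<alpha> (Inr y)"
  shows "sat w i \<alpha> \<phi> \<Longrightarrow> sat w i \<beta> \<phi>"
proof (induction \<phi> arbitrary: i)
  case (Fle x a)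
  then show ?case using assms(1)[of x] by (auto intro: order_trans)
next
  case (Gle y a)
  then show ?case using assms(2)[of y] by auto
qed force+

text \<open>Under a valuation that vanishes on all G-variables other than y, the
  G-operators for those variables are vacuous, so phi and phi_y agree.\<close>
lemma sat_restrictG:
  assumes "\<And>z. z \<noteq> y \<Longrightarrow> \<alpha> (Inr z) = 0"
  shows "sat w i \<alpha> \<phi> = sat w i \<alpha> (restrictG y \<phi>)"
  using assms by (induction \<phi> arbitrary: i) auto

lemma finite_var: "finite (var \<phi>)"
  by (induction \<phi>) auto

lemma var_restrictG:
  assumes "is_PLTL_G \<phi>" "Inr y \<in> var \<phi>"
  shows "var (restrictG y \<phi>) = {Inr y}"
proof -
  have "var (restrictG y \<phi>) \<subseteq> {Inr y}"
    using assms(1) by (induction \<phi>) (auto simp: is_PLTL_G_def)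
  moreover have "Inr y \<in> var (restrictG y \<phi>)"
    using assms(2) by (induction \<phi>) auto
  ultimately show ?thesis by blast
qed

lemma W0_transfer:
  assumes "\<alpha> \<in> W0 A \<phi>" "\<beta> \<in> valuations (var \<psi>)"
    and "\<And>\<rho>. wins0 A \<phi> \<alpha> \<rho> \<Longrightarrow> wins0 A \<psi> \<beta> \<rho>"
  shows "\<beta> \<in> W0 A \<psi>"
  using assms unfolding W0_def by blast

lemma W0_mono:
  assumes "\<alpha> \<in> W0 A \<phi>" "\<beta> \<in> valuations (var \<phi>)"
    and "\<And>x. \<alpha> (Inl x) \<le> \<beta> (Inl x)" "\<And>y. \<beta> (Inr y) \<le> \<alpha> (Inr y)"
  shows "\<beta> \<in> W0 A \<phi>"
  using assms sat_mono[of \<alpha> \<beta>] by (intro W0_transfer[OF assms(1,2)]) (auto simp: wins0_def)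

text \<open>An infinite set of valuations with finite support S is unbounded in
  some coordinate of S (only finitely many functions S \<rightarrow> a finite set).\<close>
lemma unbounded_coordinate:
  assumes "finite S" "W \<subseteq> valuations S" "infinite W"
  shows "\<exists>v\<in>S. infinite ((\<lambda>\<alpha>. \<alpha> v) ` W)"
proof (rule ccontr)
  assume "\<not> ?thesis"
  then have fin: "finite (\<Union>v\<in>S. (\<lambda>\<alpha>. \<alpha> v) ` W)" (is "finite ?R")
    using assms(1) by auto
  have "W \<subseteq> {f. \<forall>x. (x \<in> S \<longrightarrow> f x \<in> ?R) \<and> (x \<notin> S \<longrightarrow> f x = 0)}"
    using assms(2) by (auto simp: valuations_def)
  moreover have "finite {f. \<forall>x. (x \<in> S \<longrightarrow> f x \<in> ?R) \<and> (x \<notin> S \<longrightarrow> f x = (0::nat))}"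
    by (rule finite_set_of_finite_funs[OF assms(1) fin])
  ultimately show False using assms(3) finite_subset by blast
qed

lemma infinite_if_inj_range:
  fixes f :: "nat \<Rightarrow> 'a"
  assumes "inj f" "range f \<subseteq> W"
  shows "infinite W"
  using assms finite_imageD finite_subset infinite_UNIV_nat by blast

lemma W0_infinite_if_Fle:
  assumes "Inl x \<in> var \<chi>" "\<alpha> \<in> W0 A \<chi>"
  shows "infinite (W0 A \<chi>)"
proof (rule infinite_if_inj_range)
  let ?f = "\<lambda>n. \<alpha>(Inl x := \<alpha> (Inl x) + n)"
  show "inj ?f"
    by (rule injI) (metis add_left_cancel fun_upd_same)
  have "\<alpha> \<in> valuations (var \<chi>)" using assms(2) by (simp add: W0_def)
  then have "?f n \<in> valuations (var \<chi>)" for n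
    using assms(1) by (auto simp: valuations_def)
  then show "range ?f \<subseteq> W0 A \<chi>"
    using W0_mono[OF assms(2)] by auto
qed

definition single_val :: "'y \<Rightarrow> nat \<Rightarrow> ('x + 'y \<Rightarrow> nat)" where
  "single_val y n = (\<lambda>v. if v = Inr y then n else 0)"

lemma single_val_valuations: "single_val y n \<in> valuations {Inr y}"
  by (simp add: single_val_def valuations_def)

lemma valuations_mono: "S \<subseteq> T \<Longrightarrow> valuations S \<subseteq> valuations T"
  by (auto simp: valuations_def)

lemma W0_restrictG_iff:
  assumes "Inr y \<in> var \<phi>" "is_PLTL_G \<phi>" "\<beta> \<in> valuations {Inr y}"
  shows "\<beta> \<in> W0 A \<phi> \<longleftrightarrow> \<beta> \<in> W0 A (restrictG y \<phi>)"
proof -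
  have "\<beta> (Inr z) = 0" if "z \<noteq> y" for z
    using assms(3) that by (simp add: valuations_def)
  then have same_wins: "wins0 A \<phi> \<beta> \<rho> = wins0 A (restrictG y \<phi>) \<beta> \<rho>" for \<rho>
    unfolding wins0_def by (rule sat_restrictG)
  have "\<beta> \<in> valuations (var \<phi>)"
    using assms(1,3) valuations_mono[of "{Inr y}" "var \<phi>"] by blast
  moreover have "\<beta> \<in> valuations (var (restrictG y \<phi>))"
    using assms(3) var_restrictG[OF assms(2,1)] by simp
  ultimately show ?thesis
    using W0_transfer[of \<beta> A] same_wins by blast
qed

lemma W0_infinite_imp_restrictG:
  assumes "is_PLTL_G \<phi>" "infinite (W0 A \<phi>)"
  shows "\<exists>y. Inr y \<in> var \<phi> \<and> valuations {Inr y} \<subseteq> W0 A (restrictG y \<phi>)"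
proof -
  have "W0 A \<phi> \<subseteq> valuations (var \<phi>)" by (auto simp: W0_def)
  from unbounded_coordinate[OF finite_var this assms(2)] obtain v
    where v: "v \<in> var \<phi>" "infinite ((\<lambda>\<alpha>. \<alpha> v) ` W0 A \<phi>)" by blast
  then obtain y where y: "v = Inr y" using assms(1) by (auto simp: is_PLTL_G_def)
  have "\<beta> \<in> W0 A (restrictG y \<phi>)" if b: "\<beta> \<in> valuations {Inr y}" for \<beta>
  proof -
    obtain \<alpha> where a: "\<alpha> \<in> W0 A \<phi>" "\<beta> (Inr y) \<le> \<alpha> (Inr y)"
      using v(2) y finite_nat_set_iff_bounded_le by (metis (no_types, lifting) imageE nle_le)
    have "\<alpha> \<in> valuations (var \<phi>)" using a(1) by (simp add: W0_def)
    then have no_F: "\<alpha> (Inl x) = 0" for x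
      using assms(1) by (auto simp: valuations_def is_PLTL_G_def)
    have "\<beta> \<in> valuations (var \<phi>)"
      using b v y valuations_mono[of "{Inr y}" "var \<phi>"] by blast
    then have "\<beta> \<in> W0 A \<phi>"
    proof (rule W0_mono[OF a(1)])
      show "\<alpha> (Inl x) \<le> \<beta> (Inl x)" for x using no_F by simp
      show "\<beta> (Inr z) \<le> \<alpha> (Inr z)" for z
        using a(2) b by (cases "z = y") (auto simp: valuations_def)
    qed
    then show ?thesis using W0_restrictG_iff[OF v(1)[unfolded y] assms(1) b] by blast
  qed
  then show ?thesis using v y by blast
qed

lemma W0_infinite_if_restrictG:
  assumes "is_PLTL_G \<phi>" "Inr y \<in> var \<phi>" "valuations {Inr y} \<subseteq> W0 A (restrictG y \<phi>)"
  shows "infinite (W0 A \<phi>)"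
proof (rule infinite_if_inj_range)
  show "inj (single_val y)"
  proof (rule injI)
    fix m n assume "single_val y m = single_val y n"
    from fun_cong[OF this, of "Inr y"] show "m = n" by (simp add: single_val_def)
  qed
  have "single_val y n \<in> W0 A \<phi>" for n
    using W0_restrictG_iff[OF assms(2,1) single_val_valuations]
      subsetD[OF assms(3) single_val_valuations] by (rule iffD2)
  then show "range (single_val y) \<subseteq> W0 A \<phi>" by blast
qed

theorem mainTheorem5:
  fixes A :: "('v, 'p) arena" and \<phi> \<chi> :: "('p, 'x, 'y) pltl"
  assumes "is_arena A"
  shows "(is_PLTL_G \<phi> \<and> var \<phi> \<noteq> {} \<longrightarrow>
           (infinite (W0 A \<phi>) \<longleftrightarrow>
             (\<exists>y. Inr y \<in> var \<phi> \<and>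
                 (valuations {Inr y} \<subseteq> W0 A (restrictG y \<phi>)
                  \<or> (var (restrictG y \<phi>) = {} \<and> W0 A (restrictG y \<phi>) \<noteq> {})))))
       \<and> ((\<exists>x. Inl x \<in> var \<chi>) \<longrightarrow> (infinite (W0 A \<chi>) \<longleftrightarrow> W0 A \<chi> \<noteq> {}))"
proof (intro conjI impI)
  assume G: "is_PLTL_G \<phi> \<and> var \<phi> \<noteq> {}"
  text \<open>The second disjunct is impossible: phi_y still contains y.\<close>
  have no_empty: "var (restrictG y \<phi>) \<noteq> {}" if "Inr y \<in> var \<phi>" for y
    using var_restrictG[OF _ that] G by blast
  show "infinite (W0 A \<phi>) \<longleftrightarrow>
             (\<exists>y. Inr y \<in> var \<phi> \<and>
                 (valuations {Inr y} \<subseteq> W0 A (restrictG y \<phi>)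
                  \<or> (var (restrictG y \<phi>) = {} \<and> W0 A (restrictG y \<phi>) \<noteq> {})))"
  proof
    assume "infinite (W0 A \<phi>)"
    then show "\<exists>y. Inr y \<in> var \<phi> \<and>
                 (valuations {Inr y} \<subseteq> W0 A (restrictG y \<phi>)
                  \<or> (var (restrictG y \<phi>) = {} \<and> W0 A (restrictG y \<phi>) \<noteq> {}))"
      using W0_infinite_imp_restrictG G by blast
  next
    assume "\<exists>y. Inr y \<in> var \<phi> \<and>
                 (valuations {Inr y} \<subseteq> W0 A (restrictG y \<phi>)
                  \<or> (var (restrictG y \<phi>) = {} \<and> W0 A (restrictG y \<phi>) \<noteq> {}))"
    then obtain y where "Inr y \<in> var \<phi>" "valuations {Inr y} \<subseteq> W0 A (restrictG y \<phi>)"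
      using no_empty by blast
    with G show "infinite (W0 A \<phi>)" by (intro W0_infinite_if_restrictG) auto
  qed
next
  assume "\<exists>x. Inl x \<in> var \<chi>"
  then obtain x where "Inl x \<in> var \<chi>" by blast
  then show "infinite (W0 A \<chi>) \<longleftrightarrow> W0 A \<chi> \<noteq> {}"
    using W0_infinite_if_Fle by (metis equals0I finite.emptyI)
qed

end
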